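(* Let $R$ be a finite group of squarefree order with trivial centre, of the form $R=N\rtimes M$ with $N$ cyclic of order $n$ and $M$ cyclic of order $m$. Suppose that for every pair of primes $p,q$ with $p\mid m$ and $q\mid n$, every subgroup of $R$ of order $pq$ is nonabelian. Let $H$ be a characteristic subgroup of prime index in $R$. If $m$ is not prime, then $\mathbf{C}_{\mathrm{Aut}(R)}(H)=1$, i.e. the only automorphism of $R$ fixing every element of $H$ is the identity.
   Context: $\mathbf{C}_{\mathrm{Aut}(R)}(H)$ denotes the set of automorphisms of $R$ that fix $H$ pointwise. *)

theory Defs
  imports "HOL-Algebra.Algebra" "HOL-Computational_Algebra.Squarefree"
begin

definition group_centre :: "('a, 'b) monoid_scheme \<Rightarrow> 'a set" where
  "group_centre G = {z \<in> carrier G. \<forall>x \<in> carrier G. z \<otimes>\<^bsub>G\<^esub> x = x \<otimes>\<^bsub>G\<^esub> z}"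

definition characteristic :: "'a set \<Rightarrow> ('a, 'b) monoid_scheme \<Rightarrow> bool" where
  "characteristic H G \<longleftrightarrow> subgroup H G \<and> (\<forall>\<phi> \<in> iso G G. \<phi> ` H = H)"

end

(*
  Being characteristic, H is normal, and R/H has prime order, hence is abelian: H contains
  every commutator. The hypothesis on subgroups of order pq, together with |R| = |N| |M|
  squarefree, says that no nontrivial element of N commutes with a nontrivial element of M
  (powers of prime order of two such elements would generate an abelian subgroup of order pq).
  The trivial centre makes N and M nontrivial. For 1 <> y in M the map v |-> [y, v] is then
  injective on the finite normal subgroup N, so every element of N is a commutator and N <= H.
  If H met M trivially, M would be a complement of H and |R : H| = m would be prime; so H
  contains some 1 <> a in M. An element centralising H commutes with a nontrivial element of
  N <= H and with a, and this forces it to be 1. Finally, if phi fixes the normal subgroup H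
  pointwise, then x^-1 phi(x) centralises H, so phi(x) = x.
*)

theory Submission
  imports Defs
begin

lemma squarefree_mult_imp_coprime:
  fixes a b :: "'a :: semiring_gcd"
  assumes "squarefree (a * b)"
  shows "coprime a b"
proof -
  have "gcd a b ^ 2 dvd a * b"
    unfolding power2_eq_square by (intro mult_dvd_mono gcd_dvd1 gcd_dvd2)
  then have "is_unit (gcd a b)"
    by (rule squarefreeD[OF assms])
  then show ?thesis
    by (rule is_unit_gcd[THEN iffD1])
qed

lemma (in comm_group) commutator_eq_one:
  assumes "x \<in> carrier G" "y \<in> carrier G"
  shows "x \<otimes> y \<otimes> inv x \<otimes> inv y = \<one>"
  using assms by (simp add: m_comm[of x y] m_assoc)

context group
begin

lemma prime_order_imp_comm_group:
  assumes "Factorial_Ring.prime (order G)"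
  shows "comm_group G"
proof -
  have fin: "finite (carrier G)"
    using assms card.infinite not_prime_0 unfolding order_def by metis
  have "carrier G \<noteq> {\<one>}"
    using assms by (auto simp: order_def)
  then obtain u where u: "u \<in> carrier G" "u \<noteq> \<one>"
    by blast
  have "ord u dvd order G" "ord u \<noteq> 1"
    using ord_dvd_group_order ord_eq_1 u by blast+
  then have "ord u = order G"
    using assms prime_nat_iff by blast
  then have "card (generate G {u}) = card (carrier G)"
    using generate_pow_card[OF u(1)] by (simp add: order_def)
  then have "generate G {u} = carrier G"
    using card_subset_eq[OF fin] generate_incl u(1) by blast
  then have "carrier G = range (\<lambda>n::int. u [^] n)"
    using generate_pow[OF u(1)] by (simp add: full_SetCompr_eq)
  then show ?thesis
    using cyclic_group cyclic_imp_abelian_group u(1) by blast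
qed

lemma conjugation_iso:
  assumes "g \<in> carrier G"
  shows "(\<lambda>h. g \<otimes> h \<otimes> inv g) \<in> iso G G"
proof -
  have "(\<lambda>h. g \<otimes> h \<otimes> inv g) \<in> hom G G"
    using assms by (intro homI) (simp_all add: m_assoc, simp add: m_assoc[symmetric])
  moreover have "bij_betw (\<lambda>h. g \<otimes> h \<otimes> inv g) (carrier G) (carrier G)"
    using bij_betw_cong conjugation_is_bij[OF assms] by fastforce
  ultimately show ?thesis
    unfolding iso_def by simp
qed

lemma characteristic_imp_normal:
  assumes "characteristic H G"
  shows "H \<lhd> G"
  using assms conjugation_iso unfolding characteristic_def normal_inv_iff by blast

lemma commutator_mem_of_prime_index:
  assumes "H \<lhd> G" "Factorial_Ring.prime (card (rcosets H))" "x \<in> carrier G" "y \<in> carrier G"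
  shows "x \<otimes> y \<otimes> inv x \<otimes> inv y \<in> H"
proof -
  interpret H: normal H G
    by fact
  have "order (G Mod H) = card (rcosets H)"
    by (simp add: order_def FactGroup_def)
  then interpret Q: comm_group "G Mod H"
    using group.prime_order_imp_comm_group[OF H.factorgroup_is_group] assms(2) by simp
  have q: "group_hom G (G Mod H) (\<lambda>a. H #> a)"
    using H.r_coset_hom_Mod H.factorgroup_is_group by unfold_locales auto
  have cosets: "H #> x \<in> carrier (G Mod H)" "H #> y \<in> carrier (G Mod H)"
    using assms(3,4) group_hom.hom_closed[OF q] by blast+
  have "H #> (x \<otimes> y \<otimes> inv x \<otimes> inv y)
        = (H #> x) \<otimes>\<^bsub>G Mod H\<^esub> (H #> y) \<otimes>\<^bsub>G Mod H\<^esub> inv\<^bsub>G Mod H\<^esub> (H #> x)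
            \<otimes>\<^bsub>G Mod H\<^esub> inv\<^bsub>G Mod H\<^esub> (H #> y)"
    using assms(3,4)
    by (simp only: group_hom.hom_mult[OF q] group_hom.hom_inv[OF q] m_closed inv_closed)
  also have "\<dots> = H"
    using Q.commutator_eq_one[OF cosets] by (simp only: one_FactGroup)
  finally have "H #> (x \<otimes> y \<otimes> inv x \<otimes> inv y) = H" .
  then show ?thesis
    using coset_join1[OF _ _ H.subgroup_axioms] assms(3,4) by simp
qed

lemma card_set_mult_subgroups:
  assumes "subgroup A G" "subgroup B G" "A \<inter> B = {\<one>}"
  shows "card (A <#> B) = card A * card B"
proof -
  have "inj_on (\<lambda>(a, b). a \<otimes> b) (A \<times> B)"
  proof (rule inj_onI, clarify)
    fix a b a' b' assume mem: "a \<in> A" "b \<in> B" "a' \<in> A" "b' \<in> B" and eq: "a \<otimes> b = a' \<otimes> b'"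
    have carrier: "a \<in> carrier G" "b \<in> carrier G" "a' \<in> carrier G" "b' \<in> carrier G"
      using mem assms(1,2) subgroup.mem_carrier by metis+
    have "inv a' \<otimes> a = inv a' \<otimes> (a \<otimes> b) \<otimes> inv b"
      using carrier by (simp add: m_assoc)
    also have "\<dots> = b' \<otimes> inv b"
      unfolding eq using carrier by (simp add: m_assoc[symmetric])
    finally have "inv a' \<otimes> a = b' \<otimes> inv b" .
    moreover have "inv a' \<otimes> a \<in> A" "b' \<otimes> inv b \<in> B"
      using mem assms(1,2) by (simp_all add: subgroup.m_closed subgroup.m_inv_closed)
    ultimately have "inv a' \<otimes> a = \<one>"
      using assms(3) by auto
    then have "a = a'"
      using inv_solve_left'[of "\<one>" a' a] carrier by simp
    then show "a = a' \<and> b = b'"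
      using eq carrier by simp
  qed
  moreover have "A <#> B = (\<lambda>(a, b). a \<otimes> b) ` (A \<times> B)"
    unfolding set_mult_def by auto
  ultimately show ?thesis
    by (simp add: card_image card_cartesian_product)
qed

lemma card_rcosets_complement:
  assumes "finite (carrier G)" "subgroup H G" "subgroup M G"
    and "H \<inter> M = {\<one>}" "H <#> M = carrier G"
  shows "card (rcosets H) = card M"
proof -
  have "card (rcosets H) * card H = card H * card M"
    using lagrange[OF assms(2)] card_set_mult_subgroups[OF assms(2-4)]
    unfolding assms(5) order_def by simp
  moreover have "finite H"
    using assms(1) subgroup.subset[OF assms(2)] by (rule finite_subset[rotated])
  then have "card H \<noteq> 0"
    using subgroup.one_closed[OF assms(2)] by auto
  ultimately show ?thesis
    by simp
qed

lemma ord_mult_of_commuting_coprime: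
  assumes "x \<in> carrier G" "y \<in> carrier G" "x \<otimes> y = y \<otimes> x" "coprime (ord x) (ord y)"
  shows "ord (x \<otimes> y) = ord x * ord y"
proof (rule dvd_antisym)
  have pow: "(x \<otimes> y) [^] k = x [^] k \<otimes> y [^] k" for k :: nat
    by (rule pow_mult_distrib[OF assms(3,1,2)])
  have "x [^] (ord x * ord y) = \<one>" "y [^] (ord x * ord y) = \<one>"
    using assms(1,2) pow_eq_id by simp_all
  then have "(x \<otimes> y) [^] (ord x * ord y) = \<one>"
    using pow by simp
  then show "ord (x \<otimes> y) dvd ord x * ord y"
    using pow_eq_id[OF m_closed[OF assms(1,2)]] by blast
  have "(x \<otimes> y) [^] (ord (x \<otimes> y) * k) = \<one>" for k
    using pow_eq_id[OF m_closed[OF assms(1,2)]] by simp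
  moreover have "x [^] (ord (x \<otimes> y) * ord x) = \<one>" "y [^] (ord (x \<otimes> y) * ord y) = \<one>"
    using assms(1,2) pow_eq_id by simp_all
  ultimately have "x [^] (ord (x \<otimes> y) * ord y) = \<one>" "y [^] (ord (x \<otimes> y) * ord x) = \<one>"
    using pow[of "ord (x \<otimes> y) * ord y"] pow[of "ord (x \<otimes> y) * ord x"] assms(1,2) by simp_all
  then have "ord x dvd ord (x \<otimes> y) * ord y" "ord y dvd ord (x \<otimes> y) * ord x"
    using assms(1,2) pow_eq_id by simp_all
  then show "ord x * ord y dvd ord (x \<otimes> y)"
    using assms(4) by (simp add: coprime_dvd_mult_left_iff coprime_commute divides_mult)
qed

lemma comm_group_subgroup_generated_iff:
  assumes "subgroup K G"
  shows "comm_group (subgroup_generated G K) \<longleftrightarrow> (\<forall>a\<in>K. \<forall>b\<in>K. a \<otimes> b = b \<otimes> a)"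
proof -
  have carrier: "carrier (subgroup_generated G K) = K"
    by (rule subgroup.carrier_subgroup_generated_subgroup[OF assms])
  have mult: "a \<otimes>\<^bsub>subgroup_generated G K\<^esub> b = a \<otimes> b" for a b
    by (simp add: subgroup_generated_def)
  show ?thesis
  proof
    assume "comm_group (subgroup_generated G K)"
    then show "\<forall>a\<in>K. \<forall>b\<in>K. a \<otimes> b = b \<otimes> a"
      using comm_monoid.m_comm[of "subgroup_generated G K"] unfolding comm_group_def carrier mult
      by blast
  qed (use group.group_comm_groupI[OF group_subgroup_generated, of K] carrier mult in auto)
qed

lemma comm_group_generate_singleton:
  assumes "z \<in> carrier G"
  shows "comm_group (subgroup_generated G (generate G {z}))"
proof -
  have "\<forall>x\<in>generate G {z}. \<forall>y\<in>generate G {z}. x \<otimes> y = y \<otimes> x"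
    unfolding generate_pow[OF assms] by (auto simp: add.commute simp flip: int_pow_mult[OF assms])
  then show ?thesis
    using comm_group_subgroup_generated_iff[OF generate_is_subgroup] assms by simp
qed

lemma abelian_subgroup_of_commuting_coprime:
  assumes "x \<in> carrier G" "y \<in> carrier G" "x \<otimes> y = y \<otimes> x" "coprime (ord x) (ord y)"
  obtains K where "subgroup K G" "card K = ord x * ord y" "comm_group (subgroup_generated G K)"
proof
  have xy: "x \<otimes> y \<in> carrier G"
    using assms(1,2) by simp
  show "subgroup (generate G {x \<otimes> y}) G"
    using xy by (simp add: generate_is_subgroup)
  show "card (generate G {x \<otimes> y}) = ord x * ord y"
    using generate_pow_card[OF xy] ord_mult_of_commuting_coprime[OF assms] by simp
  show "comm_group (subgroup_generated G (generate G {x \<otimes> y}))"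
    by (rule comm_group_generate_singleton[OF xy])
qed

lemma ord_dvd_card_subgroup:
  assumes "finite (carrier G)" "subgroup S G" "x \<in> S"
  shows "ord x dvd card S"
proof -
  interpret S: group "G\<lparr>carrier := S\<rparr>"
    using subgroup.subgroup_is_group[OF assms(2) is_group] .
  have "x [^] card S = \<one>"
    using S.pow_order_eq_1[of x] assms(3) nat_pow_consistent[of x "card S" S]
    by (simp add: order_def)
  then show ?thesis
    using pow_eq_id subgroup.mem_carrier[OF assms(2,3)] by blast
qed

lemma exists_pow_prime_ord:
  assumes "finite (carrier G)" "x \<in> carrier G" "x \<noteq> \<one>"
  obtains k :: nat where "Factorial_Ring.prime (ord (x [^] k))"
proof -
  have "ord x \<noteq> 1"
    using ord_eq_1 assms(2,3) by blast
  then obtain q where q: "Factorial_Ring.prime q" "q dvd ord x"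
    using prime_factor_nat by blast
  have "ord x \<noteq> 0"
    using ord_ge_1[OF assms(1,2)] by simp
  then have "ord (x [^] (ord x div q)) = q"
    using q ord_pow[OF assms(2), of "ord x div q"] by (auto elim!: dvdE)
  then show ?thesis
    using that q(1) by metis
qed

lemma commuting_elements_of_complements_trivial:
  assumes fin: "finite (carrier G)" and sq: "squarefree (order G)"
    and N: "subgroup N G" and M: "subgroup M G"
    and NM: "N \<inter> M = {\<one>}" "N <#> M = carrier G"
    and nonabelian: "\<And>p q K. Factorial_Ring.prime p \<Longrightarrow> Factorial_Ring.prime q \<Longrightarrow>
           p dvd card M \<Longrightarrow> q dvd card N \<Longrightarrow> subgroup K G \<Longrightarrow> card K = p * q \<Longrightarrow>
           \<not> comm_group (subgroup_generated G K)"
    and uv: "u \<in> N" "v \<in> M" "u \<otimes> v = v \<otimes> u"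
  shows "u = \<one> \<or> v = \<one>"
proof (rule ccontr)
  assume "\<not> (u = \<one> \<or> v = \<one>)"
  then have nontrivial: "u \<noteq> \<one>" "v \<noteq> \<one>"
    by auto
  have carrier: "u \<in> carrier G" "v \<in> carrier G"
    using subgroup.mem_carrier[OF N uv(1)] subgroup.mem_carrier[OF M uv(2)] by auto
  obtain k l :: nat
    where "Factorial_Ring.prime (ord (u [^] k))" "Factorial_Ring.prime (ord (v [^] l))"
    using exists_pow_prime_ord[OF fin carrier(1) nontrivial(1)]
      exists_pow_prime_ord[OF fin carrier(2) nontrivial(2)] by metis
  moreover define a b where "a = u [^] k" and "b = v [^] l"
  ultimately have prime: "Factorial_Ring.prime (ord a)" "Factorial_Ring.prime (ord b)"
    by simp_all
  have ab: "a \<in> N" "b \<in> M"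
    using subgroup_int_pow_closed[OF N uv(1), of "int k"] subgroup_int_pow_closed[OF M uv(2), of "int l"]
    by (simp_all add: a_def b_def int_pow_int)
  have ab_carrier: "a \<in> carrier G" "b \<in> carrier G"
    using carrier by (simp_all add: a_def b_def)
  have "u [^] k \<otimes> v = v \<otimes> u [^] k"
    by (rule group_commutes_pow[OF uv(3) carrier])
  then have "v [^] l \<otimes> u [^] k = u [^] k \<otimes> v [^] l"
    using carrier by (intro group_commutes_pow) simp_all
  then have commute: "a \<otimes> b = b \<otimes> a"
    unfolding a_def b_def by simp
  have dvd: "ord a dvd card N" "ord b dvd card M"
    using ord_dvd_card_subgroup[OF fin N ab(1)] ord_dvd_card_subgroup[OF fin M ab(2)] .
  have "coprime (card N) (card M)"
    using sq card_set_mult_subgroups[OF N M NM(1)] NM(2)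
    by (simp add: order_def squarefree_mult_imp_coprime)
  then have "coprime (ord a) (ord b)"
    using dvd by (blast intro: coprime_imp_coprime dvd_trans)
  then obtain K where "subgroup K G" "card K = ord a * ord b" "comm_group (subgroup_generated G K)"
    using abelian_subgroup_of_commuting_coprime[OF ab_carrier commute] by blast
  then show False
    using nonabelian[OF prime(2,1) dvd(2,1)] by (simp add: mult.commute)
qed

lemma complements_nontrivial:
  assumes "subgroup N G" "subgroup M G" "N <#> M = carrier G"
    and "\<forall>u\<in>N. \<forall>v\<in>N. u \<otimes> v = v \<otimes> u" "\<forall>u\<in>M. \<forall>v\<in>M. u \<otimes> v = v \<otimes> u"
    and "group_centre G = {\<one>}" "carrier G \<noteq> {\<one>}"
  shows "\<exists>z\<in>N. z \<noteq> \<one>" "\<exists>y\<in>M. y \<noteq> \<one>"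
proof -
  have not_comm: "carrier G \<noteq> K" if "\<forall>u\<in>K. \<forall>v\<in>K. u \<otimes> v = v \<otimes> u" for K
    using assms(6,7) that unfolding group_centre_def by auto
  have "{\<one>} <#> M = M" "N <#> {\<one>} = N"
    using lcos_mult_one[OF subgroup.subset[OF assms(2)]] coset_mult_one[OF subgroup.subset[OF assms(1)]]
    by (simp_all add: l_coset_eq_set_mult r_coset_eq_set_mult)
  then have "N \<noteq> {\<one>}" "M \<noteq> {\<one>}"
    using not_comm assms(3-5) by auto
  then show "\<exists>z\<in>N. z \<noteq> \<one>" "\<exists>y\<in>M. y \<noteq> \<one>"
    using subgroup.one_closed[OF assms(1)] subgroup.one_closed[OF assms(2)] by blast+
qed

lemma conjugates_eq_imp_commute:
  assumes "h \<in> carrier G" "x \<in> carrier G" "y \<in> carrier G"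
    and "x \<otimes> h \<otimes> inv x = y \<otimes> h \<otimes> inv y"
  shows "inv y \<otimes> x \<otimes> h = h \<otimes> (inv y \<otimes> x)"
proof -
  have "inv y \<otimes> x \<otimes> h = inv y \<otimes> (x \<otimes> h \<otimes> inv x) \<otimes> x"
    using assms(1-3) by (simp add: m_assoc)
  also have "\<dots> = inv y \<otimes> (y \<otimes> h \<otimes> inv y) \<otimes> x"
    by (simp only: assms(4))
  also have "\<dots> = h \<otimes> (inv y \<otimes> x)"
    using assms(1-3) by (simp add: m_assoc[symmetric])
  finally show ?thesis .
qed

lemma commutator_image_eq_if_centraliser_trivial:
  assumes fin: "finite (carrier G)" and N: "N \<lhd> G" and y: "y \<in> carrier G"
    and centraliser: "\<And>u. u \<in> N \<Longrightarrow> u \<otimes> y = y \<otimes> u \<Longrightarrow> u = \<one>"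
  shows "(\<lambda>v. y \<otimes> v \<otimes> inv y \<otimes> inv v) ` N = N"
proof (rule endo_inj_surj)
  interpret N: normal N G
    by fact
  show "finite N"
    using fin N.subset finite_subset by blast
  show "(\<lambda>v. y \<otimes> v \<otimes> inv y \<otimes> inv v) ` N \<subseteq> N"
    using N.inv_op_closed2[OF y] by auto
  show "inj_on (\<lambda>v. y \<otimes> v \<otimes> inv y \<otimes> inv v) N"
  proof (rule inj_onI)
    fix v w assume vw: "v \<in> N" "w \<in> N" and eq: "y \<otimes> v \<otimes> inv y \<otimes> inv v = y \<otimes> w \<otimes> inv y \<otimes> inv w"
    have carrier: "v \<in> carrier G" "w \<in> carrier G"
      using vw N.mem_carrier by auto
    have "inv (v \<otimes> y \<otimes> inv v) = inv (w \<otimes> y \<otimes> inv w)"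
      using eq carrier y by (simp add: inv_mult_group m_assoc)
    then have "v \<otimes> y \<otimes> inv v = w \<otimes> y \<otimes> inv w"
      using inv_inj carrier y by (simp add: inj_on_eq_iff)
    then have "inv w \<otimes> v \<otimes> y = y \<otimes> (inv w \<otimes> v)"
      using carrier y by (simp add: conjugates_eq_imp_commute)
    then have "inv w \<otimes> v = \<one>"
      using centraliser vw by (simp add: N.m_closed N.m_inv_closed)
    then show "v = w"
      using inv_solve_left'[of "\<one>" w v] carrier by simp
  qed
qed

lemma subset_prime_index_if_centraliser_trivial:
  assumes "finite (carrier G)" "N \<lhd> G" "H \<lhd> G" "Factorial_Ring.prime (card (rcosets H))"
    and "y \<in> carrier G" "\<And>u. u \<in> N \<Longrightarrow> u \<otimes> y = y \<otimes> u \<Longrightarrow> u = \<one>"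
  shows "N \<subseteq> H"
proof -
  have "(\<lambda>v. y \<otimes> v \<otimes> inv y \<otimes> inv v) ` N \<subseteq> H"
    using commutator_mem_of_prime_index[OF assms(3-5)]
      subgroup.mem_carrier[OF normal_imp_subgroup[OF assms(2)]] by blast
  then show ?thesis
    using commutator_image_eq_if_centraliser_trivial[OF assms(1,2,5,6)] by simp
qed

lemma subgroup_meets_complement:
  assumes "finite (carrier G)" "subgroup H G" "subgroup M G" "N \<subseteq> H" "N <#> M = carrier G"
    and "card (rcosets H) \<noteq> card M"
  shows "\<exists>a\<in>H \<inter> M. a \<noteq> \<one>"
proof (rule ccontr)
  assume "\<not> (\<exists>a\<in>H \<inter> M. a \<noteq> \<one>)"
  then have "H \<inter> M = {\<one>}"
    using subgroup.one_closed assms(2,3) by blast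
  moreover have "H <#> M = carrier G"
    using mono_set_mult[OF assms(4) subset_refl[of M], where G = G] assms(5)
      set_mult_closed[OF subgroup.subset[OF assms(2)] subgroup.subset[OF assms(3)]] by blast
  ultimately show False
    using card_rcosets_complement[OF assms(1-3)] assms(6) by simp
qed

lemma eq_one_if_commutes_with_both_complements:
  assumes N: "subgroup N G" and M: "subgroup M G" and NM: "N <#> M = carrier G"
    and N_comm: "\<forall>u\<in>N. \<forall>v\<in>N. u \<otimes> v = v \<otimes> u"
    and fixed_point_free: "\<And>u v. u \<in> N \<Longrightarrow> v \<in> M \<Longrightarrow> u \<otimes> v = v \<otimes> u \<Longrightarrow> u = \<one> \<or> v = \<one>"
    and c: "c \<in> carrier G"
    and z: "z \<in> N" "z \<noteq> \<one>" "c \<otimes> z = z \<otimes> c"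
    and a: "a \<in> M" "a \<noteq> \<one>" "c \<otimes> a = a \<otimes> c"
  shows "c = \<one>"
proof -
  obtain n m where nm: "n \<in> N" "m \<in> M" "c = n \<otimes> m"
    using c NM unfolding set_mult_def by blast
  have carrier: "n \<in> carrier G" "m \<in> carrier G" "z \<in> carrier G"
    using subgroup.mem_carrier[OF N nm(1)] subgroup.mem_carrier[OF M nm(2)]
      subgroup.mem_carrier[OF N z(1)] by auto
  have "n \<otimes> (m \<otimes> z) = n \<otimes> (z \<otimes> m)"
  proof -
    have "n \<otimes> (m \<otimes> z) = z \<otimes> (n \<otimes> m)"
      using z(3) carrier by (simp add: nm(3) m_assoc)
    also have "\<dots> = n \<otimes> (z \<otimes> m)"
      using N_comm z(1) nm(1) carrier by (simp add: m_assoc[symmetric])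
    finally show ?thesis .
  qed
  then have "m = \<one>"
    using fixed_point_free[OF z(1) nm(2)] z(2) carrier by simp
  then have "c \<in> N"
    using nm carrier by simp
  then show ?thesis
    using fixed_point_free a by blast
qed

lemma hom_eq_id_if_fixes_subgroup_with_trivial_centraliser:
  assumes H: "H \<lhd> G" and \<phi>: "\<phi> \<in> hom G G" and fixed: "\<And>h. h \<in> H \<Longrightarrow> \<phi> h = h"
    and centraliser: "\<And>c. c \<in> carrier G \<Longrightarrow> (\<And>h. h \<in> H \<Longrightarrow> c \<otimes> h = h \<otimes> c) \<Longrightarrow> c = \<one>"
    and x: "x \<in> carrier G"
  shows "\<phi> x = x"
proof -
  interpret H: normal H G
    by fact
  interpret \<phi>: group_hom G G \<phi>
    using \<phi> by unfold_locales
  have \<phi>x: "\<phi> x \<in> carrier G"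
    using x by simp
  have "inv x \<otimes> \<phi> x = \<one>"
  proof (rule centraliser)
    fix h assume h: "h \<in> H"
    then have hG: "h \<in> carrier G"
      by (rule H.mem_carrier)
    have "\<phi> x \<otimes> h \<otimes> inv (\<phi> x) = \<phi> (x \<otimes> h \<otimes> inv x)"
      using x hG fixed[OF h] by (simp add: \<phi>.hom_inv)
    also have "\<dots> = x \<otimes> h \<otimes> inv x"
      using fixed H.inv_op_closed2[OF x h] by blast
    finally show "inv x \<otimes> \<phi> x \<otimes> h = h \<otimes> (inv x \<otimes> \<phi> x)"
      using x hG \<phi>x by (simp add: conjugates_eq_imp_commute)
  qed (use x \<phi>x in simp)
  then show ?thesis
    using inv_solve_left'[of "\<one>" x "\<phi> x"] x \<phi>x by simp
qed

end

theorem lemma3p1: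
  fixes R :: "('a, 'b) monoid_scheme" and N M H :: "'a set" and n m :: nat
  assumes "group R"
    and "finite (carrier R)"
    and "squarefree (order R)"
    and "group_centre R = {\<one>\<^bsub>R\<^esub>}"
    and "N \<lhd> R" and "subgroup M R"
    and "N \<inter> M = {\<one>\<^bsub>R\<^esub>}" and "N <#>\<^bsub>R\<^esub> M = carrier R"
    and "cyclic_group (subgroup_generated R N)" and "card N = n"
    and "cyclic_group (subgroup_generated R M)" and "card M = m"
    and "\<And>p q K. Factorial_Ring.prime p \<Longrightarrow> Factorial_Ring.prime q \<Longrightarrow> p dvd m \<Longrightarrow> q dvd n \<Longrightarrow>
           subgroup K R \<Longrightarrow> card K = p * q \<Longrightarrow> \<not> comm_group (subgroup_generated R K)"
    and "characteristic H R"
    and "Factorial_Ring.prime (card (rcosets\<^bsub>R\<^esub> H))"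
    and "\<not> Factorial_Ring.prime m"
  shows "\<forall>\<phi> \<in> iso R R. (\<forall>h \<in> H. \<phi> h = h) \<longrightarrow> (\<forall>x \<in> carrier R. \<phi> x = x)"
proof (intro ballI impI)
  fix \<phi> x assume \<phi>: "\<phi> \<in> iso R R" and fixed: "\<forall>h\<in>H. \<phi> h = h" and x: "x \<in> carrier R"
  interpret group R
    by fact
  have H: "H \<lhd> R"
    by (rule characteristic_imp_normal[OF assms(14)])
  have N: "subgroup N R"
    by (rule normal_imp_subgroup[OF assms(5)])
  have abelian: "\<forall>u\<in>N. \<forall>v\<in>N. u \<otimes>\<^bsub>R\<^esub> v = v \<otimes>\<^bsub>R\<^esub> u" "\<forall>u\<in>M. \<forall>v\<in>M. u \<otimes>\<^bsub>R\<^esub> v = v \<otimes>\<^bsub>R\<^esub> u"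
    using comm_group_subgroup_generated_iff N assms(6,9,11)
      group.cyclic_imp_abelian_group[OF group_subgroup_generated] by blast+
  have fixed_point_free: "u = \<one>\<^bsub>R\<^esub> \<or> v = \<one>\<^bsub>R\<^esub>"
    if "u \<in> N" "v \<in> M" "u \<otimes>\<^bsub>R\<^esub> v = v \<otimes>\<^bsub>R\<^esub> u" for u v
    using commuting_elements_of_complements_trivial[OF assms(2,3) N assms(6-8) _ that]
      assms(13)[unfolded assms(10,12)[symmetric]] by blast
  have "carrier R \<noteq> {\<one>\<^bsub>R\<^esub>}"
    using lagrange[OF normal_imp_subgroup[OF H]] assms(15) by (auto simp: order_def)
  then obtain z y where z: "z \<in> N" "z \<noteq> \<one>\<^bsub>R\<^esub>" and y: "y \<in> M" "y \<noteq> \<one>\<^bsub>R\<^esub>"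
    using complements_nontrivial[OF N assms(6,8) abelian assms(4)] by blast
  have "N \<subseteq> H"
    using subset_prime_index_if_centraliser_trivial[OF assms(2,5) H assms(15)] fixed_point_free y
      subgroup.mem_carrier[OF assms(6)] by blast
  then obtain a where a: "a \<in> H" "a \<in> M" "a \<noteq> \<one>\<^bsub>R\<^esub>"
    using subgroup_meets_complement[OF assms(2) normal_imp_subgroup[OF H] assms(6) _ assms(8)]
      assms(12,15,16) by fastforce
  have centraliser: "c = \<one>\<^bsub>R\<^esub>"
    if "c \<in> carrier R" "\<And>h. h \<in> H \<Longrightarrow> c \<otimes>\<^bsub>R\<^esub> h = h \<otimes>\<^bsub>R\<^esub> c" for c
    using eq_one_if_commutes_with_both_complements[OF N assms(6,8) abelian(1) fixed_point_free
        that(1) z that(2)[OF subsetD[OF \<open>N \<subseteq> H\<close> z(1)]] a(2,3) that(2)[OF a(1)]] .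
  show "\<phi> x = x"
    using hom_eq_id_if_fixes_subgroup_with_trivial_centraliser[OF H _ _ centraliser x] \<phi> fixed
    by (simp add: iso_def)
qed

end
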